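(* Let $\phi$ be one of the two numbers $\frac{-1\pm\sqrt5}{2}$. In $\mathbb{C}\mathbb{P}^2$ with homogeneous coordinates $[x:y:z]$ consider the lines $L_1: z=0$, $L_2: x=0$, $L_3: x-z=0$, $L_4: y=0$, $L_5: y-z=0$, $L_6: x-y=0$, $L_7: x+\phi y-z=0$, $L_8: \phi x-\phi y+z=0$, $L_9: -\phi x+(\phi-1)y=0$, $L_{10}: x-\phi z=0$, and $L^1_{11}: (\phi+2)x-(\phi+1)y+\phi z=0$, $L^1_{12}: (\phi-1)x-\phi y+(2\phi-1)z=0$, $L^1_{13}: (-2\phi+1)x+(-3\phi+2)y+(\phi-1)z=0$, $L^2_{11}: (\phi+2)x-(\phi+3)y+(\phi+2)z=0$, $L^2_{12}: -(\phi+1)x+(\phi-2)y+z=0$, $L^2_{13}: -x+(-\phi+2)y-(\phi+1)z=0$. Let $\mathcal{B}_1=\{L_1,\dots,L_{10},L^1_{11},L^1_{12},L^1_{13}\}$ and $\mathcal{B}_2=\{L_1,\dots,L_{10},L^2_{11},L^2_{12},L^2_{13}\}$. Then $\mathcal{B}_1$ and $\mathcal{B}_2$ form a (real) nonarithmetic pair defined over $\mathbb{Q}(\sqrt5)$.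
   Context: A line arrangement is a finite set of distinct lines in $\mathbb{C}\mathbb{P}^2$. Its combinatorics is the pair $(\mathcal{A},\mathrm{sing}(\mathcal{A}))$ where each singular point is identified with the set of lines of $\mathcal{A}$ through it. Two arrangements are lattice isomorphic if some bijection between their lines induces a bijection between their sets of singular points. The moduli space $\mathcal{M}(\mathcal{C})$ of a combinatorics $\mathcal{C}$ is the set of arrangements with combinatorics $\mathcal{C}$ modulo $\mathrm{PGL}_3(\mathbb{C})$. A pair of arrangements means two lattice isomorphic arrangements lying in different connected components of their common moduli space. The definition field $\mathbb{F}(\mathcal{A})$ is the number field generated by the coefficients of the lines of $\mathcal{A}$. A field automorphism $\sigma$ acts on a line $ax+by+cz=0$ by $\sigma(a)x+\sigma(b)y+\sigma(c)z=0$, and on an arrangement line by line. A pair $\mathcal{A}_1,\mathcal{A}_2$ is arithmetic if, for a number field $\mathbb{F}$ containing both definition fields, some $\sigma\in\mathrm{Gal}(\mathbb{F}/\mathbb{Q})$ satisfies $\sigma\cdot\mathcal{A}_1=\mathcal{A}_2$; it is nonarithmetic otherwise. *)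

theory Defs
  imports "HOL-Analysis.Analysis"
begin

text \<open>Lines of CP2 and points of CP2 are both represented by nonzero vectors in complex^3,
  up to nonzero scalar multiples.  The line with coefficient vector l = (a,b,c) is ax+by+cz=0.\<close>

definition incident :: "complex^3 \<Rightarrow> complex^3 \<Rightarrow> bool" where
  "incident p l \<longleftrightarrow> (\<Sum>k\<in>UNIV. p$k * l$k) = 0"

definition pclass :: "complex^3 \<Rightarrow> (complex^3) set" where
  "pclass v = {w. \<exists>c. c \<noteq> 0 \<and> w = c *s v}"

definition is_arrangement :: "(complex^3)^'n \<Rightarrow> bool" where
  "is_arrangement L \<longleftrightarrow> (\<forall>i. L$i \<noteq> 0) \<and> (\<forall>i j. i \<noteq> j \<longrightarrow> pclass (L$i) \<noteq> pclass (L$j))"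

definition lines_of :: "(complex^3)^'n \<Rightarrow> (complex^3) set set" where
  "lines_of L = {pclass (L$i) | i. True}"

text \<open>Combinatorics: each singular point (point on at least two lines) identified with the
  set of (labels of) lines through it.\<close>
definition comb :: "(complex^3)^'n::finite \<Rightarrow> 'n set set" where
  "comb L = {{i. incident p (L$i)} | p. p \<noteq> 0 \<and> card {i. incident p (L$i)} \<ge> 2}"

definition lattice_iso :: "(complex^3)^'n::finite \<Rightarrow> (complex^3)^'n \<Rightarrow> ('n \<Rightarrow> 'n) \<Rightarrow> bool" where
  "lattice_iso L1 L2 f \<longleftrightarrow> bij f \<and> (image f) ` comb L1 = comb L2"

text \<open>Realization space (ordered, all representatives) of a combinatorics C; the moduli space is
  its quotient by PGL3 and by rescaling of representatives (connected groups).\<close>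
definition realization_space :: "'n::finite set set \<Rightarrow> ((complex^3)^'n) set" where
  "realization_space C = {L. is_arrangement L \<and> comb L = C}"

definition relabel :: "(complex^3)^'n \<Rightarrow> ('n \<Rightarrow> 'n) \<Rightarrow> (complex^3)^'n" where
  "relabel L f = (\<chi> i. L$(f i))"

definition is_pair :: "(complex^3)^'n::finite \<Rightarrow> (complex^3)^'n \<Rightarrow> bool" where
  "is_pair L1 L2 \<longleftrightarrow> is_arrangement L1 \<and> is_arrangement L2 \<and> (\<exists>f. lattice_iso L1 L2 f) \<and>
     (\<forall>f. lattice_iso L1 L2 f \<longrightarrow>
        relabel L2 f \<notin> connected_component_set (realization_space (comb L1)) L1)"

definition is_subfield :: "complex set \<Rightarrow> bool" where
  "is_subfield F \<longleftrightarrow> 0 \<in> F \<and> 1 \<in> F \<and> (\<forall>x\<in>F. \<forall>y\<in>F. x + y \<in> F \<and> x * y \<in> F) \<and>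
     (\<forall>x\<in>F. - x \<in> F) \<and> (\<forall>x\<in>F. x \<noteq> 0 \<longrightarrow> inverse x \<in> F)"

definition number_field :: "complex set \<Rightarrow> bool" where
  "number_field F \<longleftrightarrow> is_subfield F \<and>
     (\<exists>bs :: complex list. F \<subseteq> {sum_list (map2 (\<lambda>q b. of_rat q * b) qs bs) | qs. length qs = length bs})"

text \<open>Definition field: the field generated by the coefficients of the lines (coefficients taken
  up to scaling, i.e. ratios of coefficients of each line).\<close>
definition def_field :: "(complex^3)^'n \<Rightarrow> complex set" where
  "def_field L = \<Inter>{F. is_subfield F \<and> (\<forall>i j k. L$i$j \<noteq> 0 \<longrightarrow> L$i$k / L$i$j \<in> F)}"

definition field_aut :: "complex set \<Rightarrow> (complex \<Rightarrow> complex) \<Rightarrow> bool" where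
  "field_aut F \<sigma> \<longleftrightarrow> bij_betw \<sigma> F F \<and> (\<forall>x\<in>F. \<forall>y\<in>F. \<sigma> (x + y) = \<sigma> x + \<sigma> y \<and> \<sigma> (x * y) = \<sigma> x * \<sigma> y)"

definition act :: "(complex \<Rightarrow> complex) \<Rightarrow> (complex^3)^'n \<Rightarrow> (complex^3)^'n" where
  "act \<sigma> L = (\<chi> i. \<chi> k. \<sigma> (L$i$k))"

definition arithmetic_pair :: "(complex^3)^'n::finite \<Rightarrow> (complex^3)^'n \<Rightarrow> bool" where
  "arithmetic_pair L1 L2 \<longleftrightarrow> (\<exists>F \<sigma> M. number_field F \<and> def_field L1 \<subseteq> F \<and> def_field L2 \<subseteq> F \<and>
     field_aut F \<sigma> \<and> (\<forall>i. pclass (M$i) = pclass (L1$i) \<and> (\<forall>k. M$i$k \<in> F)) \<and>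
     lines_of (act \<sigma> M) = lines_of L2)"

definition Q_sqrt5 :: "complex set" where
  "Q_sqrt5 = {of_rat a + of_rat b * complex_of_real (sqrt 5) | a b. True}"

definition B1 :: "complex \<Rightarrow> (complex^3)^13" where
  "B1 \<phi> = vector [vector [0,0,1], vector [1,0,0], vector [1,0,-1], vector [0,1,0],
     vector [0,1,-1], vector [1,-1,0], vector [1,\<phi>,-1], vector [\<phi>,-\<phi>,1],
     vector [-\<phi>,\<phi>-1,0], vector [1,0,-\<phi>],
     vector [\<phi>+2, -(\<phi>+1), \<phi>], vector [\<phi>-1, -\<phi>, 2*\<phi>-1],
     vector [-2*\<phi>+1, -3*\<phi>+2, \<phi>-1]]"

definition B2 :: "complex \<Rightarrow> (complex^3)^13" where
  "B2 \<phi> = vector [vector [0,0,1], vector [1,0,0], vector [1,0,-1], vector [0,1,0],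
     vector [0,1,-1], vector [1,-1,0], vector [1,\<phi>,-1], vector [\<phi>,-\<phi>,1],
     vector [-\<phi>,\<phi>-1,0], vector [1,0,-\<phi>],
     vector [\<phi>+2, -(\<phi>+3), \<phi>+2], vector [-(\<phi>+1), \<phi>-2, 1],
     vector [-1, -\<phi>+2, -(\<phi>+1)]]"

end

theory Submission
  imports Defs "HOL-Computational_Algebra.Primes" "HOL-Computational_Algebra.Polynomial"
begin

text \<open>Both arrangements are defined over \<open>\<int>[\<phi>]\<close>, in which \<open>a + b\<phi> = 0\<close> forces
  \<open>a = b = 0\<close> because \<open>\<surd>5\<close> is irrational; so every incidence question about them reduces to
  integer arithmetic. Both realize the same combinatorics, with 14 triple points and two quadruple
  points, and this combinatorics has no automorphism besides the identity.

  Moving \<open>L\<^sub>1, L\<^sub>2, L\<^sub>4\<close> to the coordinate lines and \<open>L\<^sub>7\<close> to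
  \<open>x + y + z = 0\<close>, the remaining incidences force the slope \<open>g\<close> of \<open>L\<^sub>1\<^sub>1\<close> to satisfy
  \<open>(g + 1)(g\<^sup>2 + 4g - 1) = 0\<close> on the whole realization space. This slope is continuous
  and takes finitely many values there, and it is \<open>-1\<close> for \<open>B2\<close> but not for \<open>B1\<close>: the two
  arrangements lie in different connected components.

  A field automorphism sends \<open>\<phi>\<close> to a root of \<open>X\<^sup>2 + X - 1\<close>, i.e. to \<open>\<phi>\<close> or to
  \<open>-1 - \<phi>\<close>, so it maps \<open>B1\<close> to \<open>B1\<close> or to its Galois conjugate; neither contains the line
  \<open>L\<^sup>2\<^sub>1\<^sub>1\<close> of \<open>B2\<close>.\<close>

section \<open>Lines and points of the projective plane in coordinates\<close>

definition det3 :: "'a::comm_ring_1^3 \<Rightarrow> 'a^3 \<Rightarrow> 'a^3 \<Rightarrow> 'a" where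
  "det3 a b c = a$1 * (b$2 * c$3 - b$3 * c$2) - a$2 * (b$1 * c$3 - b$3 * c$1)
     + a$3 * (b$1 * c$2 - b$2 * c$1)"

definition meet :: "'a::comm_ring_1^3 \<Rightarrow> 'a^3 \<Rightarrow> 'a^3" where
  "meet a b = vector [a$2 * b$3 - a$3 * b$2, a$3 * b$1 - a$1 * b$3, a$1 * b$2 - a$2 * b$1]"

definition dot3 :: "'a::comm_ring_1^3 \<Rightarrow> 'a^3 \<Rightarrow> 'a" where
  "dot3 p l = p$1 * l$1 + p$2 * l$2 + p$3 * l$3"

lemma incident_iff_dot3: "incident p l \<longleftrightarrow> dot3 p l = 0"
  by (simp add: incident_def dot3_def sum_3)

lemma dot3_meet: "dot3 (meet a b) c = det3 a b c"
  by (simp add: dot3_def meet_def det3_def algebra_simps)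

lemma det3_repeated: "det3 a a c = 0" "det3 a c a = 0" "det3 c a a = 0"
  by (simp_all add: det3_def algebra_simps)

lemma det3_smult: "det3 (x *s a) (y *s b) (z *s c) = x * y * z * det3 a b c"
  by (simp add: det3_def algebra_simps)

lemma cramer_meets:
  "det3 a b m *s p = dot3 p a *s meet b m + dot3 p b *s meet m a + dot3 p m *s meet a b"
  by (simp add: vec_eq_iff forall_3 det3_def dot3_def meet_def algebra_simps)

lemma incident_meet_iff_det3:
  fixes p :: "'a::idom^3"
  assumes "p \<noteq> 0" "dot3 p a = 0" "dot3 p b = 0" "meet a b \<noteq> 0"
  shows "dot3 p m = 0 \<longleftrightarrow> det3 a b m = 0"
  using cramer_meets[of a b m p] assms by auto

lemma pclass_smult:
  assumes "c \<noteq> 0"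
  shows "pclass (c *s a) = pclass a"
proof -
  have "(\<exists>d. d \<noteq> 0 \<and> w = d *s (c *s a)) \<longleftrightarrow> (\<exists>d. d \<noteq> 0 \<and> w = d *s a)" for w
  proof
    assume "\<exists>d. d \<noteq> 0 \<and> w = d *s (c *s a)"
    then show "\<exists>d. d \<noteq> 0 \<and> w = d *s a"
      using assms by (metis mult_eq_0_iff vector_smult_assoc)
  next
    assume "\<exists>d. d \<noteq> 0 \<and> w = d *s a"
    then obtain d where "d \<noteq> 0" "w = d *s a" by blast
    then show "\<exists>d. d \<noteq> 0 \<and> w = d *s (c *s a)"
      using assms by (intro exI[of _ "d / c"]) (simp add: vector_smult_assoc)
  qed
  then show ?thesis unfolding pclass_def by simp
qed

lemma self_mem_pclass: "a \<in> pclass a"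
  unfolding pclass_def by (auto intro: exI[of _ 1])

lemma pclass_eq_zero_iff: "pclass a = pclass b \<Longrightarrow> a = 0 \<longleftrightarrow> b = 0"
proof -
  have "pclass 0 = {0}" unfolding pclass_def by (auto intro: exI[of _ 1])
  then show "pclass a = pclass b \<Longrightarrow> a = 0 \<longleftrightarrow> b = 0" using self_mem_pclass by (metis singletonD)
qed

lemma meet_eq_0_proportional:
  fixes a b :: "'a::field^3"
  assumes "meet a b = 0" and "a$k \<noteq> 0"
  shows "b = (b$k / a$k) *s a"
proof -
  have "a$i * b$j = a$j * b$i" for i j
    using assms(1) exhaust_3[of i] exhaust_3[of j]
    by (auto simp: meet_def vec_eq_iff forall_3 algebra_simps)
  then show ?thesis
    using assms(2) by (simp add: vec_eq_iff field_simps)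
qed

lemma meet_eq_0_iff_pclass_eq:
  fixes a b :: "complex^3"
  assumes "a \<noteq> 0" "b \<noteq> 0"
  shows "meet a b = 0 \<longleftrightarrow> pclass a = pclass b"
proof
  assume "meet a b = 0"
  obtain k where "a$k \<noteq> 0" using assms(1) by (auto simp: vec_eq_iff)
  then have "b = (b$k / a$k) *s a" by (rule meet_eq_0_proportional[OF \<open>meet a b = 0\<close>])
  moreover have "b$k / a$k \<noteq> 0" using calculation assms(2) by auto
  ultimately show "pclass a = pclass b" by (metis pclass_smult)
next
  assume "pclass a = pclass b"
  with self_mem_pclass[of b] obtain c where "b = c *s a" unfolding pclass_def by blast
  then show "meet a b = 0" by (simp add: meet_def vec_eq_iff forall_3 algebra_simps)
qed

section \<open>The combinatorics of an arrangement through concurrency\<close>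

definition concurrent :: "('a::comm_ring_1^3)^'n \<Rightarrow> 'n \<Rightarrow> 'n \<Rightarrow> 'n \<Rightarrow> bool" where
  "concurrent L i j k \<longleftrightarrow> det3 (L$i) (L$j) (L$k) = 0"

definition lines_through :: "('a::comm_ring_1^3)^'n \<Rightarrow> 'n \<Rightarrow> 'n \<Rightarrow> 'n set" where
  "lines_through L i j = {k. concurrent L i j k}"

lemma lines_through_refl: "i \<in> lines_through L i j" "j \<in> lines_through L i j"
  by (simp_all add: lines_through_def concurrent_def det3_repeated)

lemma meet_arrangement_ne_0:
  "is_arrangement L \<Longrightarrow> i \<noteq> j \<Longrightarrow> meet (L$i) (L$j) \<noteq> 0"
  unfolding is_arrangement_def using meet_eq_0_iff_pclass_eq by blast

lemma mem_comb_iff: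
  "S \<in> comb L \<longleftrightarrow> (\<exists>p. p \<noteq> 0 \<and> S = {i. incident p (L$i)} \<and> 2 \<le> card S)"
  unfolding comb_def by blast

lemma comb_member_eq_lines_through:
  assumes L: "is_arrangement L" and S: "S \<in> comb L" and "i \<in> S" "j \<in> S" "i \<noteq> j"
  shows "S = lines_through L i j"
proof -
  obtain p where p: "p \<noteq> 0" and S_eq: "S = {k. dot3 p (L$k) = 0}"
    using S unfolding mem_comb_iff incident_iff_dot3 by blast
  then have "dot3 p (L$i) = 0" "dot3 p (L$j) = 0" using assms by auto
  with incident_meet_iff_det3[OF p _ _ meet_arrangement_ne_0[OF L \<open>i \<noteq> j\<close>]] show ?thesis
    unfolding S_eq lines_through_def concurrent_def by auto
qed

lemma lines_through_mem_comb:
  assumes L: "is_arrangement L" and "i \<noteq> j"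
  shows "lines_through L i j \<in> comb L"
proof -
  let ?p = "meet (L$i) (L$j)"
  have "lines_through L i j = {k. incident ?p (L$k)}"
    by (simp add: lines_through_def concurrent_def incident_iff_dot3 dot3_meet)
  moreover have "card {i, j} \<le> card (lines_through L i j)"
    by (rule card_mono) (simp_all add: lines_through_refl)
  then have "2 \<le> card (lines_through L i j)" using \<open>i \<noteq> j\<close> by simp
  ultimately show ?thesis
    unfolding mem_comb_iff using meet_arrangement_ne_0[OF assms] by blast
qed

lemma comb_eq_lines_through:
  assumes "is_arrangement L"
  shows "comb L = {lines_through L i j | i j. i \<noteq> j}"
proof (intro set_eqI iffI)
  fix S assume S: "S \<in> comb L"
  then have "\<not> card S \<le> Suc 0" unfolding mem_comb_iff by auto
  then obtain i j where "i \<in> S" "j \<in> S" "i \<noteq> j" using card_le_Suc0_iff_eq[of S] by auto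
  then show "S \<in> {lines_through L i j | i j. i \<noteq> j}"
    using comb_member_eq_lines_through[OF assms S] by blast
qed (use lines_through_mem_comb[OF assms] in blast)

lemma concurrent_iff_comb:
  assumes "is_arrangement L" "i \<noteq> j"
  shows "concurrent L i j k \<longleftrightarrow> (\<exists>S\<in>comb L. {i, j, k} \<subseteq> S)"
proof
  assume "concurrent L i j k"
  then have "{i, j, k} \<subseteq> lines_through L i j"
    by (simp add: lines_through_refl) (simp add: lines_through_def)
  then show "\<exists>S\<in>comb L. {i, j, k} \<subseteq> S" using lines_through_mem_comb[OF assms] by blast
next
  assume "\<exists>S\<in>comb L. {i, j, k} \<subseteq> S"
  then obtain S where "S \<in> comb L" "{i, j, k} \<subseteq> S" by blast
  with comb_member_eq_lines_through[OF assms(1)] assms(2) have "k \<in> lines_through L i j" by blast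
  then show "concurrent L i j k" by (simp add: lines_through_def)
qed

lemma comb_eq_iff_concurrent_eq:
  assumes "is_arrangement L" "is_arrangement M"
  shows "comb L = comb M \<longleftrightarrow> (\<forall>i j k. i \<noteq> j \<longrightarrow> concurrent L i j k = concurrent M i j k)"
proof
  assume "comb L = comb M"
  then show "\<forall>i j k. i \<noteq> j \<longrightarrow> concurrent L i j k = concurrent M i j k"
    using concurrent_iff_comb[OF assms(1)] concurrent_iff_comb[OF assms(2)] by simp
next
  assume "\<forall>i j k. i \<noteq> j \<longrightarrow> concurrent L i j k = concurrent M i j k"
  then have "i \<noteq> j \<Longrightarrow> lines_through L i j = lines_through M i j" for i j
    by (simp add: lines_through_def)
  then show "comb L = comb M"
    unfolding comb_eq_lines_through[OF assms(1)] comb_eq_lines_through[OF assms(2)] by blast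
qed

section \<open>Realizations of a prescribed set of multiple points\<close>

definition realizes :: "('a::comm_ring_1^3)^'n \<Rightarrow> 'n set set \<Rightarrow> bool" where
  "realizes L M \<longleftrightarrow> (\<forall>i j k. distinct [i, j, k] \<longrightarrow> (concurrent L i j k \<longleftrightarrow> (\<exists>P\<in>M. {i, j, k} \<subseteq> P)))"

lemma realizes_det3_eq_0_iff:
  "realizes L M \<Longrightarrow> distinct [i, j, k] \<Longrightarrow>
    det3 (L$i) (L$j) (L$k) = 0 \<longleftrightarrow> (\<exists>P\<in>M. {i, j, k} \<subseteq> P)"
  by (simp add: realizes_def concurrent_def)

lemma concurrent_if_not_distinct: "\<not> distinct [i, j, k] \<Longrightarrow> concurrent L i j k"
  by (auto simp: concurrent_def det3_repeated)

lemma realizes_concurrent_eq: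
  "realizes L M \<Longrightarrow> realizes L' M \<Longrightarrow> concurrent L i j k \<longleftrightarrow> concurrent L' i j k"
  unfolding realizes_def by (metis concurrent_if_not_distinct)

lemma comb_eq_if_realizes:
  assumes "is_arrangement L" "is_arrangement L'" "realizes L M" "realizes L' M"
  shows "comb L = comb L'"
  using comb_eq_iff_concurrent_eq[OF assms(1,2)] realizes_concurrent_eq[OF assms(3,4)] by blast

lemma realizes_if_comb_eq:
  assumes "is_arrangement L" "is_arrangement L'" "comb L = comb L'" "realizes L M"
  shows "realizes L' M"
  using assms(4) comb_eq_iff_concurrent_eq[OF assms(1,2)] assms(3)
  unfolding realizes_def by (metis distinct_length_2_or_more)

lemma realizes_if_det3_proportional:
  fixes L L' :: "('a::idom^3)^'n"
  assumes "\<And>i j k. det3 (L'$i) (L'$j) (L'$k) = K * det3 (L$i) (L$j) (L$k)" "K \<noteq> 0" "realizes L M"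
  shows "realizes L' M"
  using assms(2,3) unfolding realizes_def concurrent_def assms(1) by simp

lemma lines_through_realization:
  fixes L :: "('a::comm_ring_1^3)^'n::finite"
  assumes "realizes L M" and M: "\<And>P Q. P \<in> M \<Longrightarrow> Q \<in> M \<Longrightarrow> P \<noteq> Q \<Longrightarrow> card (P \<inter> Q) \<le> 1"
    and "P \<in> M" "i \<in> P" "j \<in> P" "i \<noteq> j"
  shows "lines_through L i j = P"
proof (intro set_eqI)
  fix k
  have unique: "Q = P" if "Q \<in> M" "{i, j} \<subseteq> Q" for Q
  proof (rule ccontr)
    assume "Q \<noteq> P"
    moreover have "card {i, j} \<le> card (Q \<inter> P)" by (rule card_mono) (use that assms in auto)
    ultimately show False using M[OF \<open>Q \<in> M\<close> \<open>P \<in> M\<close>] \<open>i \<noteq> j\<close> by simp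
  qed
  show "k \<in> lines_through L i j \<longleftrightarrow> k \<in> P"
  proof (cases "distinct [i, j, k]")
    case True
    then have "k \<in> lines_through L i j \<longleftrightarrow> (\<exists>Q\<in>M. {i, j, k} \<subseteq> Q)"
      using assms(1) unfolding realizes_def lines_through_def by simp
    also have "\<dots> \<longleftrightarrow> k \<in> P" using unique assms(3-5) by blast
    finally show ?thesis .
  next
    case False
    then have "k = i \<or> k = j" using \<open>i \<noteq> j\<close> by auto
    then show ?thesis using lines_through_refl assms(4,5) by auto
  qed
qed

lemma multiple_points_of_realization:
  fixes L :: "(complex^3)^'n::finite"
  assumes L: "is_arrangement L" and "realizes L M"
    and M: "\<And>P Q. P \<in> M \<Longrightarrow> Q \<in> M \<Longrightarrow> P \<noteq> Q \<Longrightarrow> card (P \<inter> Q) \<le> 1"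
    and M3: "\<And>P. P \<in> M \<Longrightarrow> 3 \<le> card P"
  shows "{S \<in> comb L. 3 \<le> card S} = M"
proof (intro set_eqI iffI)
  fix S assume "S \<in> {S \<in> comb L. 3 \<le> card S}"
  then have S: "S \<in> comb L" "3 \<le> card S" by auto
  then obtain T where "T \<subseteq> S" "card T = 3" by (meson obtain_subset_with_card_n)
  then obtain i j k where ijk: "distinct [i, j, k]" "{i, j, k} \<subseteq> S"
    unfolding card_3_iff by auto
  have "S = lines_through L i j"
    using comb_member_eq_lines_through[OF L S(1)] ijk by simp
  then have "concurrent L i j k" using ijk by (simp add: lines_through_def)
  then obtain P where "P \<in> M" "{i, j, k} \<subseteq> P"
    using \<open>realizes L M\<close> ijk(1) unfolding realizes_def by blast
  moreover have "lines_through L i j = P"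
    using lines_through_realization[OF \<open>realizes L M\<close> M] calculation ijk(1) by simp
  ultimately show "S \<in> M" using \<open>S = lines_through L i j\<close> by simp
next
  fix P assume "P \<in> M"
  then have "\<not> card P \<le> Suc 0" using M3 by (metis not_less_eq_eq numeral_3_eq_3 le_SucI)
  then obtain i j where "i \<in> P" "j \<in> P" "i \<noteq> j" using card_le_Suc0_iff_eq[of P] by auto
  then have "lines_through L i j = P"
    using lines_through_realization[OF \<open>realizes L M\<close> M \<open>P \<in> M\<close>] by simp
  then show "P \<in> {S \<in> comb L. 3 \<le> card S}"
    using lines_through_mem_comb[OF L \<open>i \<noteq> j\<close>] M3[OF \<open>P \<in> M\<close>] by simp
qed

lemma lattice_aut_maps_multiple_points:
  fixes L :: "(complex^3)^'n::finite"
  assumes L: "is_arrangement L" and "realizes L M"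
    and M: "\<And>P Q. P \<in> M \<Longrightarrow> Q \<in> M \<Longrightarrow> P \<noteq> Q \<Longrightarrow> card (P \<inter> Q) \<le> 1"
    and M3: "\<And>P. P \<in> M \<Longrightarrow> 3 \<le> card P"
    and f: "lattice_iso L L f" and "P \<in> M"
  shows "f ` P \<in> M"
proof -
  note multiple = multiple_points_of_realization[OF L \<open>realizes L M\<close> M M3]
  have "P \<in> comb L" "3 \<le> card P" using \<open>P \<in> M\<close> multiple by auto
  moreover have "inj f" using f by (simp add: lattice_iso_def bij_is_inj)
  ultimately have "f ` P \<in> comb L" "3 \<le> card (f ` P)"
    using f by (auto simp: lattice_iso_def card_image inj_on_subset)
  then show ?thesis using multiple by blast
qed

lemma image_family_eq:
  assumes "finite N" "inj f" "\<forall>P\<in>N. f ` P \<in> N"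
  shows "image f ` N = N"
proof (rule card_subset_eq)
  show "image f ` N \<subseteq> N" using assms(3) by (simp add: image_subset_iff)
  have "inj_on (image f) N" using assms(2) by (simp add: inj_on_def inj_image_eq_iff)
  then show "card (image f ` N) = card N" by (rule card_image)
qed (rule assms(1))

lemma card_neighbours_image:
  assumes "inj f" "image f ` N = N"
  shows "card {z. \<exists>P\<in>N. f x \<in> P \<and> z \<in> P} = card {z. \<exists>P\<in>N. x \<in> P \<and> z \<in> P}"
proof -
  have into: "f ` P \<in> N" if "P \<in> N" for P
    using that assms(2) by blast
  have onto: "\<exists>P\<in>N. Q = f ` P" if "Q \<in> N" for Q
    using that assms(2) by blast
  have "{z. \<exists>P\<in>N. f x \<in> P \<and> z \<in> P} = f ` {z. \<exists>P\<in>N. x \<in> P \<and> z \<in> P}"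
  proof (intro set_eqI iffI)
    fix y assume "y \<in> {z. \<exists>P\<in>N. f x \<in> P \<and> z \<in> P}"
    then obtain Q where Q: "Q \<in> N" "f x \<in> Q" "y \<in> Q" by blast
    then obtain P where P: "P \<in> N" "Q = f ` P" using onto by blast
    have "x \<in> P" using Q(2) P(2) inj_image_mem_iff[OF assms(1)] by simp
    moreover obtain y' where "y' \<in> P" "y = f y'" using Q(3) P(2) by blast
    ultimately show "y \<in> f ` {z. \<exists>P\<in>N. x \<in> P \<and> z \<in> P}" using P(1) by blast
  next
    fix y assume "y \<in> f ` {z. \<exists>P\<in>N. x \<in> P \<and> z \<in> P}"
    then obtain y' where y': "y = f y'" "y' \<in> {z. \<exists>P\<in>N. x \<in> P \<and> z \<in> P}" by (rule imageE)
    then obtain P where P: "P \<in> N" "x \<in> P" "y' \<in> P" by blast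
    show "y \<in> {z. \<exists>P\<in>N. f x \<in> P \<and> z \<in> P}"
    proof (intro CollectI bexI conjI)
      show "f ` P \<in> N" by (rule into[OF P(1)])
      show "f x \<in> f ` P" by (rule imageI[OF P(2)])
      show "y \<in> f ` P" unfolding y'(1) by (rule imageI[OF P(3)])
    qed
  qed
  then show ?thesis by (simp add: card_image inj_on_subset[OF assms(1)])
qed

lemma image_eq_if_unique_block:
  assumes "inj f" "f ` P \<in> M" "x \<in> P" "y \<in> P" "f x = x" "f y = y"
    and "\<forall>Q\<in>M. x \<in> Q \<and> y \<in> Q \<and> card Q = card P \<longrightarrow> Q = P"
  shows "f ` P = P"
  using assms by (metis card_image image_eqI inj_on_subset subset_UNIV)

lemma fixed_if_block_fixed:
  assumes "inj f" "f ` P = P" "c \<in> P" "\<forall>e\<in>P - {c}. f e = e"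
  shows "f c = c"
  using assms by (metis DiffI imageI injD singletonD)

section \<open>The combinatorics of \<open>B1\<close> and \<open>B2\<close>\<close>

lemma exhaust_13:
  fixes x :: 13
  shows "x = 0 \<or> x = 1 \<or> x = 2 \<or> x = 3 \<or> x = 4 \<or> x = 5 \<or> x = 6 \<or> x = 7 \<or> x = 8 \<or> x = 9
    \<or> x = 10 \<or> x = 11 \<or> x = 12"
proof (induct x)
  case (of_int z)
  then have "0 \<le> z \<and> z < 13" by simp
  then have "z = 0 \<or> z = 1 \<or> z = 2 \<or> z = 3 \<or> z = 4 \<or> z = 5 \<or> z = 6 \<or> z = 7 \<or> z = 8 \<or> z = 9
    \<or> z = 10 \<or> z = 11 \<or> z = 12" by presburger
  then show ?case by auto
qed

lemma forall_13:
  "(\<forall>x::13. P x) \<longleftrightarrow> P 0 \<and> P 1 \<and> P 2 \<and> P 3 \<and> P 4 \<and> P 5 \<and> P 6 \<and> P 7 \<and> P 8 \<and> P 9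
    \<and> P 10 \<and> P 11 \<and> P 12"
  by (metis exhaust_13)

lemma set_13: "set [0, 1, 2, 3, 4, 5, 6, 7, 8, 9, 10, 11, 12] = (UNIV :: 13 set)"
  using exhaust_13 by auto

lemma card_Collect_13:
  "card {x::13. P x} = length (filter P [0, 1, 2, 3, 4, 5, 6, 7, 8, 9, 10, 11, 12])"
proof -
  have eq: "{x::13. P x} = set (filter P [0, 1, 2, 3, 4, 5, 6, 7, 8, 9, 10, 11, 12])"
    unfolding set_filter set_13 by simp
  have "distinct [0::13, 1, 2, 3, 4, 5, 6, 7, 8, 9, 10, 11, 12]" by simp
  then have "distinct (filter P [0::13, 1, 2, 3, 4, 5, 6, 7, 8, 9, 10, 11, 12])"
    by (rule distinct_filter)
  then show ?thesis unfolding eq by (rule distinct_card)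
qed

text \<open>Equalities between numerals of type \<open>13\<close> are decided by rewriting with these facts,
  which keeps the exhaustive case checks below fast.\<close>
lemma index13_distinct:
  "distinct [0::13, 1, 2, 3, 4, 5, 6, 7, 8, 9, 10, 11, 12]"
  "distinct [12::13, 11, 10, 9, 8, 7, 6, 5, 4, 3, 2, 1, 0]"
  by simp_all

lemmas index13_neq =
  index13_distinct[unfolded distinct.simps list.set insert_iff empty_iff de_Morgan_disj simp_thms]

text \<open>Index \<open>0\<close> of the type \<open>13\<close> stands for the line \<open>L\<^sub>1\<^sub>3\<close>.\<close>
definition multiple_points :: "13 set set" where
  "multiple_points = {{1, 2, 3, 10}, {2, 4, 6, 9}, {0, 1, 11}, {0, 4, 8}, {0, 5, 12}, {1, 4, 5},
     {1, 6, 8}, {1, 7, 9}, {2, 7, 8}, {2, 11, 12}, {3, 4, 7}, {3, 5, 6}, {4, 10, 12}, {5, 7, 11},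
     {5, 8, 9}, {6, 7, 10}}"

lemma multiple_points_card: "P \<in> multiple_points \<Longrightarrow> 3 \<le> card P"
  by (auto simp: multiple_points_def index13_neq)

lemma multiple_points_meet:
  "P \<in> multiple_points \<Longrightarrow> Q \<in> multiple_points \<Longrightarrow> P \<noteq> Q \<Longrightarrow> card (P \<inter> Q) \<le> 1"
  unfolding multiple_points_def by (elim insertE emptyE) (simp_all add: index13_neq)

lemma multiple_points_neighbours:
  fixes x :: 13
  shows "card {y. \<exists>P\<in>multiple_points. x \<in> P \<and> y \<in> P} = 10 \<Longrightarrow> x = 6"
    and "card {y. \<exists>P\<in>multiple_points. x \<in> P \<and> y \<in> P} = 9 \<Longrightarrow> x = 8"
  using exhaust_13[of x]
  by (auto simp: card_Collect_13 multiple_points_def index13_neq)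

lemma multiple_points_rigid:
  assumes "inj f" and f: "\<forall>P\<in>multiple_points. f ` P \<in> multiple_points"
  shows "f = id"
proof -
  have "image f ` multiple_points = multiple_points"
    by (rule image_family_eq) (use assms in \<open>simp_all add: multiple_points_def\<close>)
  then have neighbours: "card {y. \<exists>P\<in>multiple_points. f x \<in> P \<and> y \<in> P}
      = card {y. \<exists>P\<in>multiple_points. x \<in> P \<and> y \<in> P}" for x
    by (rule card_neighbours_image[OF \<open>inj f\<close>])
  \<comment> \<open>\<open>L\<^sub>6\<close> and \<open>L\<^sub>8\<close> are singled out by the number of lines they meet in multiple
    points; from them, being fixed propagates along the multiple points.\<close>
  have "card {y. \<exists>P\<in>multiple_points. f 6 \<in> P \<and> y \<in> P} = 10"
    "card {y. \<exists>P\<in>multiple_points. f 8 \<in> P \<and> y \<in> P} = 9"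
    unfolding neighbours by (simp_all add: card_Collect_13 multiple_points_def index13_neq)
  note f6 = multiple_points_neighbours(1)[OF this(1)]
    and f8 = multiple_points_neighbours(2)[OF this(2)]
  have block: "f ` P = P"
    if "P \<in> multiple_points" "x \<in> P" "y \<in> P" "f x = x" "f y = y"
      "\<forall>Q\<in>multiple_points. x \<in> Q \<and> y \<in> Q \<and> card Q = card P \<longrightarrow> Q = P" for P x y
    using image_eq_if_unique_block[OF \<open>inj f\<close>] f that by blast
  have point: "f c = c" if "f ` P = P" "c \<in> P" "\<forall>e\<in>P - {c}. f e = e" for P c
    using fixed_if_block_fixed[OF \<open>inj f\<close>] that by blast
  note eval = multiple_points_def index13_neq insert_Diff_if
  have f1: "f 1 = 1" by (rule point[OF block[of "{1, 6, 8}" 6 8]]) (simp_all add: eval f6 f8)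
  have Q1: "f ` {1, 2, 3, 10} = {1, 2, 3, 10}" by (rule block[of _ 1 1]) (simp_all add: eval f1)
  have Q2: "f ` {2, 4, 6, 9} = {2, 4, 6, 9}" by (rule block[of _ 6 6]) (simp_all add: eval f6)
  have "f 2 \<in> f ` {1, 2, 3, 10}" "f 2 \<in> f ` {2, 4, 6, 9}" by simp_all
  then have f2: "f 2 = 2" unfolding Q1 Q2 by (auto simp: index13_neq)
  have f7: "f 7 = 7" by (rule point[OF block[of "{2, 7, 8}" 2 8]]) (simp_all add: eval f2 f8)
  have f10: "f 10 = 10" by (rule point[OF block[of "{6, 7, 10}" 6 7]]) (simp_all add: eval f6 f7)
  have f3: "f 3 = 3" by (rule point[OF Q1]) (simp_all add: eval f1 f2 f10)
  have f9: "f 9 = 9" by (rule point[OF block[of "{1, 7, 9}" 1 7]]) (simp_all add: eval f1 f7)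
  have f4: "f 4 = 4" by (rule point[OF Q2]) (simp_all add: eval f2 f6 f9)
  have f5: "f 5 = 5" by (rule point[OF block[of "{3, 5, 6}" 3 6]]) (simp_all add: eval f3 f6)
  have f11: "f 11 = 11" by (rule point[OF block[of "{5, 7, 11}" 5 7]]) (simp_all add: eval f5 f7)
  have f12: "f 12 = 12" by (rule point[OF block[of "{4, 10, 12}" 4 10]]) (simp_all add: eval f4 f10)
  have f0: "f 0 = 0" by (rule point[OF block[of "{0, 4, 8}" 4 8]]) (simp_all add: eval f4 f8)
  show "f = id"
  proof
    fix x :: 13
    show "f x = id x" using exhaust_13[of x] f0 f1 f2 f3 f4 f5 f6 f7 f8 f9 f10 f11 f12 by auto
  qed
qed

section \<open>Arithmetic in \<open>\<int>[\<phi>]\<close>\<close>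

lemma rat_square_ne_5: "(q::rat) * q \<noteq> 5"
proof
  assume q5: "q * q = 5"
  obtain a b where "quotient_of q = (a, b)" by (cases "quotient_of q")
  then have q: "q = of_int a / of_int b" and "b > 0" and "coprime a b"
    by (auto intro: quotient_of_div quotient_of_denom_pos quotient_of_coprime)
  have p5: "prime (5::int)" by (simp add: prime_nat_iff' atLeastLessThan_nat_numeral)
  have "of_int (a * a) = (of_int (5 * (b * b)) :: rat)"
    using q5 \<open>b > 0\<close> unfolding q by (simp add: field_simps)
  then have ab: "a * a = 5 * (b * b)" by (simp only: of_int_eq_iff)
  then have "5 dvd a" using p5 by (metis dvd_triv_left prime_dvd_mult_iff)
  then obtain c where "a = 5 * c" by (rule dvdE)
  with ab have "b * b = 5 * (c * c)" by simp
  then have "5 dvd b" using p5 by (metis dvd_triv_left prime_dvd_mult_iff)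
  with \<open>5 dvd a\<close> \<open>coprime a b\<close> p5 show False
    by (metis coprime_common_divisor not_prime_unit)
qed

lemma golden_ratio_eq:
  assumes "\<phi> = (-1 + complex_of_real (sqrt 5)) / 2 \<or> \<phi> = (-1 - complex_of_real (sqrt 5)) / 2"
  shows "\<phi> * \<phi> = 1 - \<phi>"
    and "complex_of_real (sqrt 5) = 2 * \<phi> + 1 \<or> complex_of_real (sqrt 5) = - (2 * \<phi> + 1)"
proof -
  show sqrt5: "complex_of_real (sqrt 5) = 2 * \<phi> + 1 \<or> complex_of_real (sqrt 5) = - (2 * \<phi> + 1)"
    using assms by (auto simp: field_simps)
  from sqrt5 have "(2 * \<phi> + 1) * (2 * \<phi> + 1) = complex_of_real (sqrt 5) * complex_of_real (sqrt 5)"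
    by (elim disjE) algebra+
  also have "\<dots> = 5" by (simp flip: of_real_mult)
  finally have "(2 * \<phi> + 1) * (2 * \<phi> + 1) = 5" .
  moreover have "4 * (\<phi> * \<phi> - (1 - \<phi>)) = (2 * \<phi> + 1) * (2 * \<phi> + 1) - 5"
    by (simp add: algebra_simps)
  ultimately have "4 * (\<phi> * \<phi> - (1 - \<phi>)) = 0" by simp
  then have "\<phi> * \<phi> - (1 - \<phi>) = 0" by (simp only: mult_eq_0_iff) simp
  then show "\<phi> * \<phi> = 1 - \<phi>" by simp
qed

text \<open>Since \<open>\<phi>\<close> is a root of the irreducible polynomial \<open>X\<^sup>2 + X - 1\<close>, the
  coefficient arithmetic below decides every identity between elements of \<open>\<int>[\<phi>]\<close>.\<close>
definition zphi :: "'a::comm_ring_1 \<Rightarrow> int \<times> int \<Rightarrow> 'a" where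
  "zphi \<phi> p = of_int (fst p) + of_int (snd p) * \<phi>"

lemma zphi_minus: "- zphi \<phi> x = zphi \<phi> (- fst x, - snd x)"
  by (simp add: zphi_def)

lemma zphi_add: "zphi \<phi> x + zphi \<phi> y = zphi \<phi> (fst x + fst y, snd x + snd y)"
  by (simp add: zphi_def algebra_simps)

lemma zphi_diff: "zphi \<phi> x - zphi \<phi> y = zphi \<phi> (fst x - fst y, snd x - snd y)"
  by (simp add: zphi_def algebra_simps)

lemma zphi_mult:
  assumes "\<phi> * \<phi> = 1 - \<phi>"
  shows "zphi \<phi> x * zphi \<phi> y =
    zphi \<phi> (fst x * fst y + snd x * snd y, fst x * snd y + snd x * fst y - snd x * snd y)"
proof -
  have "zphi \<phi> x * zphi \<phi> y = of_int (fst x) * of_int (fst y)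
      + (of_int (fst x) * of_int (snd y) + of_int (snd x) * of_int (fst y)) * \<phi>
      + of_int (snd x) * of_int (snd y) * (\<phi> * \<phi>)"
    by (simp add: zphi_def algebra_simps)
  then show ?thesis unfolding assms by (simp add: zphi_def algebra_simps)
qed

lemma zphi_eq_0_iff:
  fixes \<phi> :: complex
  assumes \<phi>: "\<phi> * \<phi> = 1 - \<phi>"
  shows "zphi \<phi> (a, b) = 0 \<longleftrightarrow> a = 0 \<and> b = 0"
proof
  assume "zphi \<phi> (a, b) = 0"
  then have b\<phi>: "of_int b * \<phi> = - of_int a" by (simp add: zphi_def add_eq_0_iff)
  have "of_int (a * a - a * b - b * b)
      = (of_int b * \<phi>) * (of_int b * \<phi>) + of_int b * (of_int b * \<phi>) - of_int b * of_int b"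
    unfolding b\<phi> by (simp add: algebra_simps)
  also have "\<dots> = of_int b * of_int b * (\<phi> * \<phi> - (1 - \<phi>))" by (simp add: algebra_simps)
  also have "\<dots> = 0" using \<phi> by simp
  finally have ab: "a * a - a * b - b * b = 0" by (simp only: of_int_eq_0_iff)
  show "a = 0 \<and> b = 0"
  proof (cases "b = 0")
    case False
    have "(2 * a - b) * (2 * a - b) = 5 * (b * b)" using ab by algebra
    then have "(of_int (2 * a - b) :: rat) * of_int (2 * a - b) = 5 * (of_int b * of_int b)"
      by (metis of_int_mult of_int_numeral)
    then have "of_int (2 * a - b) / of_int b * (of_int (2 * a - b) / of_int b) = (5::rat)"
      using False by (simp add: field_simps)
    then show ?thesis using rat_square_ne_5 by blast
  qed (use ab in simp)
qed (simp add: zphi_def)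

lemma zphi_eq_iff:
  fixes \<phi> :: complex
  assumes "\<phi> * \<phi> = 1 - \<phi>"
  shows "zphi \<phi> (a, b) = zphi \<phi> (c, d) \<longleftrightarrow> a = c \<and> b = d"
proof -
  have "zphi \<phi> (a, b) = zphi \<phi> (c, d) \<longleftrightarrow> zphi \<phi> (a, b) - zphi \<phi> (c, d) = 0" by simp
  also have "\<dots> \<longleftrightarrow> a - c = 0 \<and> b - d = 0"
    by (simp only: zphi_diff fst_conv snd_conv zphi_eq_0_iff[OF assms])
  finally show ?thesis by simp
qed

lemma zphi_conjugate: "zphi (-1 - \<phi>) (a, b) = zphi \<phi> (a - b, - b)"
  by (simp add: zphi_def algebra_simps)

section \<open>The slope of \<open>L\<^sub>1\<^sub>1\<close> in a projective frame\<close>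

text \<open>The projective change of coordinates taking the lines \<open>a, b, c\<close> to the coordinate lines
  and \<open>d\<close> to the line \<open>x + y + z = 0\<close>.\<close>
definition frame_coords :: "'a::field^3 \<Rightarrow> 'a^3 \<Rightarrow> 'a^3 \<Rightarrow> 'a^3 \<Rightarrow> 'a^3 \<Rightarrow> 'a^3" where
  "frame_coords a b c d x =
     vector [det3 b c x / det3 b c d, det3 c a x / det3 c a d, det3 a b x / det3 a b d]"

lemma det3_dot3_rows:
  "det3 (vector [dot3 p x, dot3 q x, dot3 r x]) (vector [dot3 p y, dot3 q y, dot3 r y])
     (vector [dot3 p z, dot3 q z, dot3 r z]) = det3 p q r * det3 x y z"
  by (simp add: det3_def dot3_def algebra_simps)

lemma det3_meets: "det3 (meet b c) (meet c a) (meet a b) = det3 a b c * det3 a b c"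
  by (simp add: det3_def meet_def algebra_simps)

lemma dot3_smult: "dot3 (k *s p) x = k * dot3 p x"
  by (simp add: dot3_def algebra_simps)

lemma det3_frame_coords:
  fixes a b c d :: "'a::field^3"
  shows "det3 (frame_coords a b c d x) (frame_coords a b c d y) (frame_coords a b c d z)
    = det3 a b c * det3 a b c / (det3 b c d * det3 c a d * det3 a b d) * det3 x y z"
proof -
  define P Q R where "P = inverse (det3 b c d) *s meet b c"
    and "Q = inverse (det3 c a d) *s meet c a" and "R = inverse (det3 a b d) *s meet a b"
  have "frame_coords a b c d v = vector [dot3 P v, dot3 Q v, dot3 R v]" for v
    by (simp add: frame_coords_def P_def Q_def R_def dot3_smult dot3_meet divide_inverse
        mult.commute)
  then have "det3 (frame_coords a b c d x) (frame_coords a b c d y) (frame_coords a b c d z)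
      = det3 P Q R * det3 x y z"
    by (simp add: det3_dot3_rows)
  also have "det3 P Q R = det3 a b c * det3 a b c / (det3 b c d * det3 c a d * det3 a b d)"
    unfolding P_def Q_def R_def det3_smult det3_meets by (simp add: divide_inverse mult.commute)
  finally show ?thesis .
qed

lemma frame_coords_frame:
  "frame_coords a b c d a $ 2 = 0" "frame_coords a b c d a $ 3 = 0"
  "frame_coords a b c d b $ 1 = 0" "frame_coords a b c d b $ 3 = 0"
  "frame_coords a b c d c $ 1 = 0" "frame_coords a b c d c $ 2 = 0"
  "det3 b c d \<noteq> 0 \<Longrightarrow> det3 c a d \<noteq> 0 \<Longrightarrow> det3 a b d \<noteq> 0 \<Longrightarrow> frame_coords a b c d d = vector [1, 1, 1]"
  by (simp_all add: frame_coords_def det3_repeated)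

lemma golden_cubic:
  fixes u q m w g k s t r v :: complex
  assumes "q + m = 0" "m * u = 1" "u - 1 + q = 0" "1 + m * (w - 1) = 0"
    and "t = w" "v = u" "k - g + q * (g - 1) = 0" "s = k" "g * r = k * v"
    and "t * r - s * v + q * (v - t) = 0"
  shows "(g + 1) * (g * g + 4 * g - 1) = 0"
  using assms by algebra

locale golden_frame =
  fixes L :: "(complex^3)^13"
  assumes realizes: "realizes L multiple_points"
    and frame: "L$1$2 = 0" "L$1$3 = 0" "L$2$1 = 0" "L$2$3 = 0" "L$4$1 = 0" "L$4$2 = 0"
      "L$7 = vector [1, 1, 1]"
begin

lemmas incidence = realizes_det3_eq_0_iff[OF realizes]

lemmas evaluate_incidence = incidence multiple_points_def index13_neq

lemma frame_diagonal: "L$1$1 \<noteq> 0" "L$2$2 \<noteq> 0" "L$4$3 \<noteq> 0"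
proof -
  have "det3 (L$1) (L$2) (L$4) \<noteq> 0" by (simp add: evaluate_incidence)
  then show "L$1$1 \<noteq> 0" "L$2$2 \<noteq> 0" "L$4$3 \<noteq> 0" using frame by (simp_all add: det3_def)
qed

lemma coordinate_eq_0_iff:
  "L$k$1 = 0 \<longleftrightarrow> det3 (L$k) (L$2) (L$4) = 0"
  "L$k$2 = 0 \<longleftrightarrow> det3 (L$1) (L$k) (L$4) = 0"
  "L$k$3 = 0 \<longleftrightarrow> det3 (L$1) (L$2) (L$k) = 0"
  using frame_diagonal frame by (simp_all add: det3_def)

lemma line_coordinates:
  "L$3$3 = 0" "L$5$2 = 0" "L$6$1 = 0" "L$9$1 = 0" "L$10$3 = 0"
  "L$3$1 \<noteq> 0" "L$5$1 \<noteq> 0" "L$6$2 \<noteq> 0" "L$8$1 \<noteq> 0" "L$9$2 \<noteq> 0" "L$10$1 \<noteq> 0"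
  "L$11$1 \<noteq> 0" "L$12$1 \<noteq> 0" "L$0$1 \<noteq> 0"
  by (simp_all only: coordinate_eq_0_iff) (simp_all add: evaluate_incidence)

lemma frame_relations:
  "L$3$2 = L$3$1" "L$8$3 = L$8$1" "L$9$3 = L$9$2"
  "L$5$3 * L$6$2 + L$5$1 * L$6$3 = 0"
  "L$6$2 * L$8$1 = L$6$3 * L$8$2"
  "L$5$1 * (L$8$2 - L$8$1) + L$5$3 * L$8$1 = 0"
  "L$6$2 * L$10$1 + L$6$3 * (L$10$2 - L$10$1) = 0"
  "L$10$1 * L$12$2 = L$10$2 * L$12$1"
  "L$8$1 * L$0$2 = L$8$2 * L$0$1"
  "L$5$1 * (L$11$3 - L$11$2) + L$5$3 * (L$11$2 - L$11$1) = 0"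
  "L$11$1 * L$12$3 = L$11$3 * L$12$1"
  "L$11$2 * L$0$3 = L$11$3 * L$0$2"
  "L$5$1 * (L$12$2 * L$0$3 - L$12$3 * L$0$2) + L$5$3 * (L$12$1 * L$0$2 - L$12$2 * L$0$1) = 0"
proof -
  have "det3 (L$3) (L$4) (L$7) = 0" "det3 (L$2) (L$7) (L$8) = 0" "det3 (L$1) (L$7) (L$9) = 0"
    "det3 (L$3) (L$5) (L$6) = 0" "det3 (L$1) (L$6) (L$8) = 0" "det3 (L$5) (L$8) (L$9) = 0"
    "det3 (L$6) (L$7) (L$10) = 0" "det3 (L$4) (L$10) (L$12) = 0" "det3 (L$4) (L$8) (L$0) = 0"
    "det3 (L$5) (L$7) (L$11) = 0" "det3 (L$2) (L$11) (L$12) = 0" "det3 (L$1) (L$11) (L$0) = 0"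
    "det3 (L$5) (L$12) (L$0) = 0"
    by (simp_all add: evaluate_incidence)
  note dets = this[unfolded det3_def frame line_coordinates(1-5) vector_3]
  note nonzero = frame_diagonal line_coordinates(6-)
  show r1: "L$3$2 = L$3$1" using dets(1) nonzero by (simp add: algebra_simps)
  show r2: "L$8$3 = L$8$1" using dets(2) nonzero by (simp add: algebra_simps)
  show r3: "L$9$3 = L$9$2" using dets(3) nonzero by (simp add: algebra_simps)
  have "L$3$1 * (L$5$3 * L$6$2 + L$5$1 * L$6$3) = 0"
    using dets(4) r1 r2 r3 by algebra
  then show "L$5$3 * L$6$2 + L$5$1 * L$6$3 = 0" using nonzero by simp
  have "L$1$1 * (L$6$2 * L$8$1 - L$6$3 * L$8$2) = 0"
    using dets(5) r1 r2 r3 by algebra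
  then show "L$6$2 * L$8$1 = L$6$3 * L$8$2" using nonzero by simp
  have "L$9$2 * (L$5$1 * (L$8$2 - L$8$1) + L$5$3 * L$8$1) = 0"
    using dets(6) r1 r2 r3 by algebra
  then show "L$5$1 * (L$8$2 - L$8$1) + L$5$3 * L$8$1 = 0" using nonzero by simp
  show "L$6$2 * L$10$1 + L$6$3 * (L$10$2 - L$10$1) = 0"
    using dets(7) r1 r2 r3 by algebra
  have "L$4$3 * (L$10$1 * L$12$2 - L$10$2 * L$12$1) = 0"
    using dets(8) r1 r2 r3 by algebra
  then show "L$10$1 * L$12$2 = L$10$2 * L$12$1" using nonzero by simp
  have "L$4$3 * (L$8$1 * L$0$2 - L$8$2 * L$0$1) = 0"
    using dets(9) r1 r2 r3 by algebra
  then show "L$8$1 * L$0$2 = L$8$2 * L$0$1" using nonzero by simp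
  show "L$5$1 * (L$11$3 - L$11$2) + L$5$3 * (L$11$2 - L$11$1) = 0"
    using dets(10) r1 r2 r3 by algebra
  have "L$2$2 * (L$11$1 * L$12$3 - L$11$3 * L$12$1) = 0"
    using dets(11) r1 r2 r3 by algebra
  then show "L$11$1 * L$12$3 = L$11$3 * L$12$1" using nonzero by simp
  have "L$1$1 * (L$11$2 * L$0$3 - L$11$3 * L$0$2) = 0"
    using dets(12) r1 r2 r3 by algebra
  then show "L$11$2 * L$0$3 = L$11$3 * L$0$2" using nonzero by simp
  show "L$5$1 * (L$12$2 * L$0$3 - L$12$3 * L$0$2) + L$5$3 * (L$12$1 * L$0$2 - L$12$2 * L$0$1) = 0"
    using dets(13) r1 r2 r3 by algebra
qed

lemma slope_cubic:
  defines "g \<equiv> L$11$2 / L$11$1"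
  shows "(g + 1) * (g * g + 4 * g - 1) = 0"
proof (rule golden_cubic)
  define u q m w k s t r v where "u = L$8$2 / L$8$1" and "q = L$5$3 / L$5$1"
    and "m = L$6$3 / L$6$2" and "w = L$10$2 / L$10$1" and "k = L$11$3 / L$11$1"
    and "s = L$12$3 / L$12$1" and "t = L$12$2 / L$12$1" and "r = L$0$3 / L$0$1"
    and "v = L$0$2 / L$0$1"
  note rel = frame_relations(4-) and nz = frame_diagonal line_coordinates(6-)
  note defs = u_def q_def m_def w_def k_def s_def t_def r_def v_def g_def
  show "q + m = 0" using nz unfolding defs
    by (simp add: field_simps) (use rel(1) in algebra)
  show "m * u = 1" using nz unfolding defs
    by (simp add: field_simps) (use rel(2) in algebra)
  show "u - 1 + q = 0" using nz unfolding defs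
    by (simp add: field_simps) (use rel(3) in algebra)
  show "1 + m * (w - 1) = 0" using nz unfolding defs
    by (simp add: field_simps) (use rel(4) in algebra)
  show "t = w" using nz unfolding defs
    by (simp add: field_simps) (use rel(5) in algebra)
  show "v = u" using nz unfolding defs
    by (simp add: field_simps) (use rel(6) in algebra)
  show "k - g + q * (g - 1) = 0" using nz unfolding defs
    by (simp add: field_simps) (use rel(7) in algebra)
  show "s = k" using nz unfolding defs
    by (simp add: field_simps) (use rel(8) in algebra)
  show "g * r = k * v" using nz unfolding defs
    by (simp add: field_simps) (use rel(9) in algebra)
  show "t * r - s * v + q * (v - t) = 0" using nz unfolding defs
    by (simp add: field_simps) (use rel(10) in algebra)
qed

end

definition in_frame :: "(complex^3)^13 \<Rightarrow> (complex^3)^13" where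
  "in_frame L = (\<chi> i. frame_coords (L$1) (L$2) (L$4) (L$7) (L$i))"

definition frame_slope :: "(complex^3)^13 \<Rightarrow> complex" where
  "frame_slope L = in_frame L $ 11 $ 2 / in_frame L $ 11 $ 1"

lemma frame_slope_eq:
  "frame_slope L = det3 (L$4) (L$1) (L$11) / det3 (L$4) (L$1) (L$7)
     / (det3 (L$2) (L$4) (L$11) / det3 (L$2) (L$4) (L$7))"
  by (simp add: frame_slope_def in_frame_def frame_coords_def)

lemma golden_frame_in_frame:
  assumes "realizes L multiple_points"
  shows "golden_frame (in_frame L)"
proof
  have nondegenerate: "det3 (L$1) (L$2) (L$4) \<noteq> 0" "det3 (L$2) (L$4) (L$7) \<noteq> 0"
    "det3 (L$4) (L$1) (L$7) \<noteq> 0" "det3 (L$1) (L$2) (L$7) \<noteq> 0"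
    by (simp_all add: realizes_det3_eq_0_iff[OF assms] multiple_points_def index13_neq)
  show "realizes (in_frame L) multiple_points"
    by (rule realizes_if_det3_proportional[OF _ _ assms, where K = "det3 (L$1) (L$2) (L$4)
        * det3 (L$1) (L$2) (L$4)
        / (det3 (L$2) (L$4) (L$7) * det3 (L$4) (L$1) (L$7) * det3 (L$1) (L$2) (L$7))"])
      (simp_all add: in_frame_def det3_frame_coords nondegenerate)
  show "in_frame L $ 1 $ 2 = 0" "in_frame L $ 1 $ 3 = 0" "in_frame L $ 2 $ 1 = 0"
    "in_frame L $ 2 $ 3 = 0" "in_frame L $ 4 $ 1 = 0" "in_frame L $ 4 $ 2 = 0"
    "in_frame L $ 7 = vector [1, 1, 1]"
    by (simp_all add: in_frame_def frame_coords_frame nondegenerate)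
qed

lemma frame_slope_cubic:
  assumes "realizes L multiple_points"
  shows "(frame_slope L + 1) * (frame_slope L * frame_slope L + 4 * frame_slope L - 1) = 0"
  using golden_frame.slope_cubic[OF golden_frame_in_frame[OF assms]] by (simp add: frame_slope_def)

lemma continuous_on_det3:
  "continuous_on S (\<lambda>L::('a::real_normed_field^3)^'n. det3 (L$i) (L$j) (L$k))"
  unfolding det3_def by (intro continuous_intros)

lemma continuous_on_frame_slope: "continuous_on {L. realizes L multiple_points} frame_slope"
  unfolding frame_slope_eq
  by (intro continuous_intros continuous_on_det3)
    (auto simp: realizes_det3_eq_0_iff multiple_points_def index13_neq)

lemma finite_golden_cubic_roots: "finite {g::complex. (g + 1) * (g * g + 4 * g - 1) = 0}"
proof -
  have "{g::complex. (g + 1) * (g * g + 4 * g - 1) = 0} = {g. poly [:-1, 3, 5, 1:] g = 0}"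
    by (simp add: algebra_simps)
  then show ?thesis by (metis poly_roots_finite pCons_eq_0_iff one_neq_zero)
qed

lemma invariant_constant_on_component:
  fixes h :: "'a::topological_space \<Rightarrow> 'b::real_normed_algebra_1"
  assumes "continuous_on S h" "finite (h ` S)" "b \<in> connected_component_set S a"
  shows "h b = h a"
proof -
  obtain T where "connected T" "T \<subseteq> S" "a \<in> T" "b \<in> T"
    using assms(3) unfolding connected_component_def by blast
  moreover have "h constant_on T"
    using continuous_finite_range_constant[OF \<open>connected T\<close>]
      continuous_on_subset[OF assms(1) \<open>T \<subseteq> S\<close>] finite_subset[OF image_mono[OF \<open>T \<subseteq> S\<close>] assms(2)]
    by blast
  ultimately show ?thesis unfolding constant_on_def by metis
qed

section \<open>Definition fields and field automorphisms\<close>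

lemma subfield_uminus: "is_subfield F \<Longrightarrow> x \<in> F \<Longrightarrow> - x \<in> F"
  by (simp add: is_subfield_def)

lemma subfield_closed:
  assumes "is_subfield F" "x \<in> F" "y \<in> F"
  shows "x + y \<in> F" "x * y \<in> F" "x - y \<in> F" "x / y \<in> F"
proof -
  show "x + y \<in> F" "x * y \<in> F" using assms by (simp_all add: is_subfield_def)
  show "x - y \<in> F"
    using assms subfield_uminus[OF assms(1,3)] unfolding is_subfield_def
    by (metis diff_conv_add_uminus)
  have "inverse y \<in> F" using assms by (cases "y = 0") (simp_all add: is_subfield_def)
  then show "x / y \<in> F" using assms unfolding is_subfield_def by (simp add: divide_inverse)
qed

lemma subfield_of_int:
  assumes "is_subfield F"
  shows "of_int z \<in> F"
proof -
  have "of_nat n \<in> F" for n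
    using assms by (induction n) (simp_all add: is_subfield_def)
  then show ?thesis
    using subfield_uminus[OF assms] by (cases z rule: int_cases2) simp_all
qed

lemma subfield_of_rat:
  assumes "is_subfield F"
  shows "of_rat q \<in> F"
proof -
  obtain a b where "q = of_int a / of_int b" by (metis Fract_of_int_quotient Rat_cases)
  then show ?thesis using subfield_closed(4)[OF assms subfield_of_int subfield_of_int] assms
    by (simp add: of_rat_divide)
qed

lemma subfield_zphi: "is_subfield F \<Longrightarrow> \<phi> \<in> F \<Longrightarrow> zphi \<phi> p \<in> F"
  unfolding zphi_def by (intro subfield_closed subfield_of_int)

lemma mem_Q_sqrt5_iff: "x \<in> Q_sqrt5 \<longleftrightarrow> (\<exists>a b. x = of_rat a + of_rat b * complex_of_real (sqrt 5))"
  unfolding Q_sqrt5_def by simp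

lemma Q_sqrt5_subset_Reals: "Q_sqrt5 \<subseteq> \<real>"
  unfolding Q_sqrt5_def by (auto simp: of_rat_def)

lemma Q_sqrt5_subfield: "is_subfield Q_sqrt5"
  unfolding is_subfield_def
proof (intro conjI ballI impI)
  let ?s = "complex_of_real (sqrt 5)"
  have s: "?s * ?s = 5" by (simp flip: of_real_mult)
  show "0 \<in> Q_sqrt5" "1 \<in> Q_sqrt5" unfolding mem_Q_sqrt5_iff
    by (rule exI[of _ 0] exI[of _ 1], rule exI[of _ 0], simp)+
  fix x assume "x \<in> Q_sqrt5"
  then obtain a b where x: "x = of_rat a + of_rat b * ?s" unfolding mem_Q_sqrt5_iff by blast
  show "- x \<in> Q_sqrt5" unfolding mem_Q_sqrt5_iff x
    by (intro exI[of _ "- a"] exI[of _ "- b"]) (simp add: of_rat_minus)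
  {
    fix y assume "y \<in> Q_sqrt5"
    then obtain c d where y: "y = of_rat c + of_rat d * ?s" unfolding mem_Q_sqrt5_iff by blast
    show "x + y \<in> Q_sqrt5" unfolding mem_Q_sqrt5_iff x y
      by (intro exI[of _ "a + c"] exI[of _ "b + d"]) (simp add: of_rat_add algebra_simps)
    have "x * y = of_rat (a * c + 5 * b * d) + of_rat (a * d + b * c) * ?s"
      unfolding x y of_rat_add of_rat_mult using s by (simp add: algebra_simps)
    then show "x * y \<in> Q_sqrt5" unfolding mem_Q_sqrt5_iff by blast
  }
  assume "x \<noteq> 0"
  define n where "n = a * a - 5 * b * b"
  have "n \<noteq> 0"
  proof
    assume "n = 0"
    then have "b \<noteq> 0" using \<open>x \<noteq> 0\<close> x by (auto simp: n_def)
    then have "(a / b) * (a / b) = 5" using \<open>n = 0\<close> by (simp add: n_def field_simps)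
    then show False using rat_square_ne_5 by blast
  qed
  then have n: "(of_rat n :: complex) \<noteq> 0" by simp
  have "x * (of_rat (a / n) + of_rat (- b / n) * ?s)
      = (of_rat a * of_rat a - of_rat b * of_rat b * (?s * ?s)) / of_rat n"
    unfolding x using n by (simp add: of_rat_divide of_rat_minus field_simps)
  also have "\<dots> = 1"
    using n unfolding s n_def by (simp add: of_rat_diff of_rat_mult algebra_simps)
  finally have "x * (of_rat (a / n) + of_rat (- b / n) * ?s) = 1" .
  then have "inverse x = of_rat (a / n) + of_rat (- b / n) * ?s" by (rule inverse_unique)
  then show "inverse x \<in> Q_sqrt5" unfolding mem_Q_sqrt5_iff by blast
qed

lemma golden_mem_Q_sqrt5:
  assumes "\<phi> = (-1 + complex_of_real (sqrt 5)) / 2 \<or> \<phi> = (-1 - complex_of_real (sqrt 5)) / 2"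
  shows "\<phi> \<in> Q_sqrt5"
  using assms unfolding mem_Q_sqrt5_iff
proof
  assume "\<phi> = (-1 + complex_of_real (sqrt 5)) / 2"
  then show "\<exists>a b. \<phi> = of_rat a + of_rat b * complex_of_real (sqrt 5)"
    by (intro exI[of _ "-1/2"] exI[of _ "1/2"]) (simp add: of_rat_divide of_rat_minus field_simps)
next
  assume "\<phi> = (-1 - complex_of_real (sqrt 5)) / 2"
  then show "\<exists>a b. \<phi> = of_rat a + of_rat b * complex_of_real (sqrt 5)"
    by (intro exI[of _ "-1/2"] exI[of _ "-1/2"]) (simp add: of_rat_divide of_rat_minus field_simps)
qed

lemma ratio_mem_def_field: "L$i$j \<noteq> 0 \<Longrightarrow> L$i$k / L$i$j \<in> def_field L"
  unfolding def_field_def by blast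

lemma def_field_eq_Q_sqrt5:
  fixes L :: "(complex^3)^'n"
  assumes entries: "\<And>i k. L$i$k \<in> Q_sqrt5" and "L$r$1 = 1" "L$r$2 = \<phi>"
    and sqrt5: "complex_of_real (sqrt 5) = 2 * \<phi> + 1 \<or> complex_of_real (sqrt 5) = - (2 * \<phi> + 1)"
  shows "def_field L = Q_sqrt5"
proof
  have "Q_sqrt5 \<in> {F. is_subfield F \<and> (\<forall>i j k. L$i$j \<noteq> 0 \<longrightarrow> L$i$k / L$i$j \<in> F)}"
    using Q_sqrt5_subfield subfield_closed(4)[OF Q_sqrt5_subfield entries entries] by blast
  then show "def_field L \<subseteq> Q_sqrt5" unfolding def_field_def by (rule Inter_lower)
  show "Q_sqrt5 \<subseteq> def_field L" unfolding def_field_def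
  proof (rule Inter_greatest)
    fix F assume "F \<in> {F. is_subfield F \<and> (\<forall>i j k. L$i$j \<noteq> 0 \<longrightarrow> L$i$k / L$i$j \<in> F)}"
    then have F: "is_subfield F" and ratio: "\<And>i j k. L$i$j \<noteq> 0 \<Longrightarrow> L$i$k / L$i$j \<in> F"
      by auto
    have "\<phi> \<in> F" using ratio[of r 1 2] assms(2,3) by simp
    then have "2 * \<phi> + 1 \<in> F"
      using subfield_zphi[OF F, of \<phi> "(1, 2)"] by (simp add: zphi_def add.commute)
    then have "complex_of_real (sqrt 5) \<in> F" using sqrt5 subfield_uminus[OF F] by metis
    show "Q_sqrt5 \<subseteq> F"
    proof
      fix x assume "x \<in> Q_sqrt5"
      then obtain a b where "x = of_rat a + of_rat b * complex_of_real (sqrt 5)"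
        unfolding mem_Q_sqrt5_iff by blast
      then show "x \<in> F"
        using subfield_closed(1,2)[OF F] subfield_of_rat[OF F] \<open>complex_of_real (sqrt 5) \<in> F\<close>
        by simp
    qed
  qed
qed

locale subfield_automorphism =
  fixes F :: "complex set" and \<sigma> :: "complex \<Rightarrow> complex"
  assumes subfield: "is_subfield F" and automorphism: "field_aut F \<sigma>"
begin

lemma map_add: "x \<in> F \<Longrightarrow> y \<in> F \<Longrightarrow> \<sigma> (x + y) = \<sigma> x + \<sigma> y"
  and map_mult: "x \<in> F \<Longrightarrow> y \<in> F \<Longrightarrow> \<sigma> (x * y) = \<sigma> x * \<sigma> y"
  using automorphism by (simp_all add: field_aut_def)

lemma map_inj: "x \<in> F \<Longrightarrow> y \<in> F \<Longrightarrow> \<sigma> x = \<sigma> y \<Longrightarrow> x = y"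
  using automorphism by (auto simp: field_aut_def bij_betw_def inj_on_def)

lemma map_0: "\<sigma> 0 = 0"
  using map_add[of 0 0] subfield by (simp add: is_subfield_def)

lemma map_eq_0_iff: "x \<in> F \<Longrightarrow> \<sigma> x = 0 \<longleftrightarrow> x = 0"
  using map_inj[of x 0] map_0 subfield by (auto simp: is_subfield_def)

lemma map_1: "\<sigma> 1 = 1"
proof -
  have "\<sigma> 1 * (\<sigma> 1 - 1) = 0"
    using map_mult[of 1 1] subfield by (simp add: is_subfield_def algebra_simps)
  moreover have "\<sigma> 1 \<noteq> 0" using map_eq_0_iff[of 1] subfield by (simp add: is_subfield_def)
  ultimately show ?thesis by simp
qed

lemma map_uminus:
  assumes "x \<in> F"
  shows "\<sigma> (- x) = - \<sigma> x"
proof -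
  have "\<sigma> x + \<sigma> (- x) = 0"
    using map_add[of x "- x"] map_0 subfield_uminus[OF subfield assms] assms by simp
  then show ?thesis by (simp add: add_eq_0_iff)
qed

lemma map_diff: "x \<in> F \<Longrightarrow> y \<in> F \<Longrightarrow> \<sigma> (x - y) = \<sigma> x - \<sigma> y"
  using map_add[of x "- y"] map_uminus[of y] subfield_uminus[OF subfield] by simp

lemma map_of_int: "\<sigma> (of_int z) = of_int z"
proof -
  have "\<sigma> (of_nat n) = of_nat n" for n
  proof (induction n)
    case (Suc n)
    then show ?case
      using map_add[of 1 "of_nat n"] map_1 subfield subfield_of_int[OF subfield, of "int n"]
      by (simp add: is_subfield_def)
  qed (simp add: map_0)
  then show ?thesis
    using map_uminus subfield_of_int[OF subfield]
    by (cases z rule: int_cases2) (simp_all, metis of_int_of_nat_eq)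
qed

lemma map_zphi: "\<phi> \<in> F \<Longrightarrow> \<sigma> (zphi \<phi> p) = zphi (\<sigma> \<phi>) p"
  unfolding zphi_def
  using map_add map_mult map_of_int subfield_of_int[OF subfield] subfield_closed(2)[OF subfield]
  by simp

lemma pclass_map_eq:
  assumes "\<And>k. X$k \<in> F" "\<And>k. Y$k \<in> F" "X \<noteq> 0" "Y \<noteq> 0" "pclass X = pclass Y"
  shows "pclass (\<chi> k. \<sigma> (X$k)) = pclass (\<chi> k. \<sigma> (Y$k))"
proof -
  have "meet X Y = 0" using assms(3-5) meet_eq_0_iff_pclass_eq by blast
  then have "meet (\<chi> k. \<sigma> (X$k)) (\<chi> k. \<sigma> (Y$k)) = 0"
    using assms(1,2)
    by (simp add: meet_def vec_eq_iff forall_3 subfield_closed(2)[OF subfield] map_0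
        flip: map_mult map_diff)
  moreover have "(\<chi> k. \<sigma> (X$k)) \<noteq> 0" "(\<chi> k. \<sigma> (Y$k)) \<noteq> 0"
    using assms(1-4) map_eq_0_iff by (auto simp: vec_eq_iff)
  ultimately show ?thesis using meet_eq_0_iff_pclass_eq by blast
qed

end

lemma golden_conjugates:
  fixes \<phi> \<psi> :: complex
  assumes "\<phi> * \<phi> = 1 - \<phi>" "\<psi> * \<psi> = 1 - \<psi>"
  shows "\<psi> = \<phi> \<or> \<psi> = -1 - \<phi>"
proof -
  have "(\<psi> - \<phi>) * (\<psi> + \<phi> + 1) = 0" using assms by algebra
  then have "\<psi> - \<phi> = 0 \<or> \<psi> + \<phi> + 1 = 0" by (simp only: mult_eq_0_iff)
  then show ?thesis
  proof
    assume "\<psi> + \<phi> + 1 = 0"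
    then have "\<psi> = -1 - \<phi>" by algebra
    then show ?thesis ..
  qed simp
qed

section \<open>The pair \<open>B1\<close>, \<open>B2\<close>\<close>

lemma B1_lines:
  "B1 \<phi> $ 1 = vector [zphi \<phi> (0, 0), zphi \<phi> (0, 0), zphi \<phi> (1, 0)]"
  "B1 \<phi> $ 2 = vector [zphi \<phi> (1, 0), zphi \<phi> (0, 0), zphi \<phi> (0, 0)]"
  "B1 \<phi> $ 3 = vector [zphi \<phi> (1, 0), zphi \<phi> (0, 0), zphi \<phi> (-1, 0)]"
  "B1 \<phi> $ 4 = vector [zphi \<phi> (0, 0), zphi \<phi> (1, 0), zphi \<phi> (0, 0)]"
  "B1 \<phi> $ 5 = vector [zphi \<phi> (0, 0), zphi \<phi> (1, 0), zphi \<phi> (-1, 0)]"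
  "B1 \<phi> $ 6 = vector [zphi \<phi> (1, 0), zphi \<phi> (-1, 0), zphi \<phi> (0, 0)]"
  "B1 \<phi> $ 7 = vector [zphi \<phi> (1, 0), zphi \<phi> (0, 1), zphi \<phi> (-1, 0)]"
  "B1 \<phi> $ 8 = vector [zphi \<phi> (0, 1), zphi \<phi> (0, -1), zphi \<phi> (1, 0)]"
  "B1 \<phi> $ 9 = vector [zphi \<phi> (0, -1), zphi \<phi> (-1, 1), zphi \<phi> (0, 0)]"
  "B1 \<phi> $ 10 = vector [zphi \<phi> (1, 0), zphi \<phi> (0, 0), zphi \<phi> (0, -1)]"
  "B1 \<phi> $ 11 = vector [zphi \<phi> (2, 1), zphi \<phi> (-1, -1), zphi \<phi> (0, 1)]"
  "B1 \<phi> $ 12 = vector [zphi \<phi> (-1, 1), zphi \<phi> (0, -1), zphi \<phi> (-1, 2)]"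
  "B1 \<phi> $ 0 = vector [zphi \<phi> (1, -2), zphi \<phi> (2, -3), zphi \<phi> (-1, 1)]"
  by (simp_all add: B1_def zphi_def vector_def vec_eq_iff forall_3)

lemma B2_lines:
  "B2 \<phi> $ 1 = vector [zphi \<phi> (0, 0), zphi \<phi> (0, 0), zphi \<phi> (1, 0)]"
  "B2 \<phi> $ 2 = vector [zphi \<phi> (1, 0), zphi \<phi> (0, 0), zphi \<phi> (0, 0)]"
  "B2 \<phi> $ 3 = vector [zphi \<phi> (1, 0), zphi \<phi> (0, 0), zphi \<phi> (-1, 0)]"
  "B2 \<phi> $ 4 = vector [zphi \<phi> (0, 0), zphi \<phi> (1, 0), zphi \<phi> (0, 0)]"
  "B2 \<phi> $ 5 = vector [zphi \<phi> (0, 0), zphi \<phi> (1, 0), zphi \<phi> (-1, 0)]"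
  "B2 \<phi> $ 6 = vector [zphi \<phi> (1, 0), zphi \<phi> (-1, 0), zphi \<phi> (0, 0)]"
  "B2 \<phi> $ 7 = vector [zphi \<phi> (1, 0), zphi \<phi> (0, 1), zphi \<phi> (-1, 0)]"
  "B2 \<phi> $ 8 = vector [zphi \<phi> (0, 1), zphi \<phi> (0, -1), zphi \<phi> (1, 0)]"
  "B2 \<phi> $ 9 = vector [zphi \<phi> (0, -1), zphi \<phi> (-1, 1), zphi \<phi> (0, 0)]"
  "B2 \<phi> $ 10 = vector [zphi \<phi> (1, 0), zphi \<phi> (0, 0), zphi \<phi> (0, -1)]"
  "B2 \<phi> $ 11 = vector [zphi \<phi> (2, 1), zphi \<phi> (-3, -1), zphi \<phi> (2, 1)]"
  "B2 \<phi> $ 12 = vector [zphi \<phi> (-1, -1), zphi \<phi> (-2, 1), zphi \<phi> (1, 0)]"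
  "B2 \<phi> $ 0 = vector [zphi \<phi> (-1, 0), zphi \<phi> (2, -1), zphi \<phi> (-1, -1)]"
  by (simp_all add: B2_def zphi_def vector_def vec_eq_iff forall_3)

lemma vector_3_eq_0_iff: "vector [x, y, z] = (0::'a::zero^3) \<longleftrightarrow> x = 0 \<and> y = 0 \<and> z = 0"
  by (simp add: vec_eq_iff forall_3)

lemma is_arrangementI:
  fixes L :: "(complex^3)^'n"
  assumes "\<forall>i. L$i \<noteq> 0" and "\<forall>i j. i \<noteq> j \<longrightarrow> meet (L$i) (L$j) \<noteq> 0"
  shows "is_arrangement L"
  using assms meet_eq_0_iff_pclass_eq unfolding is_arrangement_def by blast

context
  fixes \<phi> :: complex
  assumes golden: "\<phi> * \<phi> = 1 - \<phi>"
begin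

lemmas zphi_simps =
  zphi_minus zphi_add zphi_diff zphi_mult[OF golden] zphi_eq_0_iff[OF golden] zphi_eq_iff[OF golden]

lemma is_arrangement_B1: "is_arrangement (B1 \<phi>)"
  by (intro is_arrangementI)
    (simp_all add: forall_13 B1_lines meet_def vector_3_eq_0_iff zphi_simps)

lemma is_arrangement_B2: "is_arrangement (B2 \<phi>)"
  by (intro is_arrangementI)
    (simp_all add: forall_13 B2_lines meet_def vector_3_eq_0_iff zphi_simps)

lemma realizes_B1: "realizes (B1 \<phi>) multiple_points"
  unfolding realizes_def concurrent_def det3_def forall_13 multiple_points_def
  apply (simp only: distinct.simps list.set insert_iff empty_iff index13_neq bex_simps insert_subset
      simp_thms empty_subsetI)
  apply (simp add: B1_lines zphi_simps)
  done

lemma realizes_B2: "realizes (B2 \<phi>) multiple_points"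
  unfolding realizes_def concurrent_def det3_def forall_13 multiple_points_def
  apply (simp only: distinct.simps list.set insert_iff empty_iff index13_neq bex_simps insert_subset
      simp_thms empty_subsetI)
  apply (simp add: B2_lines zphi_simps)
  done

lemma comb_B1_eq_B2: "comb (B1 \<phi>) = comb (B2 \<phi>)"
  by (rule comb_eq_if_realizes[OF is_arrangement_B1 is_arrangement_B2 realizes_B1 realizes_B2])

lemma lattice_aut_B1_eq_id:
  assumes "lattice_iso (B1 \<phi>) (B1 \<phi>) f"
  shows "f = id"
proof (rule multiple_points_rigid)
  show "inj f" using assms by (simp add: lattice_iso_def bij_is_inj)
  show "\<forall>P\<in>multiple_points. f ` P \<in> multiple_points"
    using lattice_aut_maps_multiple_points[OF is_arrangement_B1 realizes_B1
        multiple_points_meet multiple_points_card assms] by blast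
qed

lemma realizes_realization_space:
  assumes "L \<in> realization_space (comb (B1 \<phi>))"
  shows "realizes L multiple_points"
  using assms realizes_if_comb_eq[OF is_arrangement_B1 _ _ realizes_B1]
  by (simp add: realization_space_def)

lemma frame_slope_B1: "frame_slope (B1 \<phi>) \<noteq> -1"
  unfolding frame_slope_eq by (simp add: B1_lines det3_def zphi_simps field_simps)

lemma frame_slope_B2: "frame_slope (B2 \<phi>) = -1"
  unfolding frame_slope_eq by (simp add: B2_lines det3_def zphi_simps field_simps)

lemma B2_not_in_component_B1:
  "B2 \<phi> \<notin> connected_component_set (realization_space (comb (B1 \<phi>))) (B1 \<phi>)"
proof
  let ?R = "realization_space (comb (B1 \<phi>))"
  assume "B2 \<phi> \<in> connected_component_set ?R (B1 \<phi>)"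
  moreover have "continuous_on ?R frame_slope"
    by (rule continuous_on_subset[OF continuous_on_frame_slope])
      (auto intro: realizes_realization_space)
  moreover have "finite (frame_slope ` ?R)"
    by (rule finite_subset[OF _ finite_golden_cubic_roots])
      (use frame_slope_cubic[OF realizes_realization_space] in blast)
  ultimately have "frame_slope (B2 \<phi>) = frame_slope (B1 \<phi>)"
    by (rule invariant_constant_on_component[rotated -1])
  then show False using frame_slope_B1 frame_slope_B2 by simp
qed

lemma is_pair_B1_B2: "is_pair (B1 \<phi>) (B2 \<phi>)"
  unfolding is_pair_def
proof (intro conjI allI impI)
  show "is_arrangement (B1 \<phi>)" "is_arrangement (B2 \<phi>)"
    using is_arrangement_B1 is_arrangement_B2 .
  show "\<exists>f. lattice_iso (B1 \<phi>) (B2 \<phi>) f"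
    by (rule exI[of _ id]) (simp add: lattice_iso_def comb_B1_eq_B2)
  fix f assume "lattice_iso (B1 \<phi>) (B2 \<phi>) f"
  then have "f = id" by (intro lattice_aut_B1_eq_id) (simp add: lattice_iso_def comb_B1_eq_B2)
  then show "relabel (B2 \<phi>) f \<notin> connected_component_set (realization_space (comb (B1 \<phi>))) (B1 \<phi>)"
    using B2_not_in_component_B1 by (simp add: relabel_def)
qed

lemma B2_line_not_in_B1:
  assumes "\<psi> = \<phi> \<or> \<psi> = -1 - \<phi>"
  shows "meet (B2 \<phi> $ 11) (B1 \<psi> $ i) \<noteq> 0"
proof -
  have "\<forall>i. meet (B2 \<phi> $ 11) (B1 \<phi> $ i) \<noteq> 0" "\<forall>i. meet (B2 \<phi> $ 11) (B1 (-1 - \<phi>) $ i) \<noteq> 0"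
    by (simp_all add: forall_13 meet_def vector_3_eq_0_iff B1_lines B2_lines zphi_conjugate
        zphi_simps)
  then show ?thesis using assms by auto
qed

lemma not_arithmetic_pair_B1_B2: "\<not> arithmetic_pair (B1 \<phi>) (B2 \<phi>)"
proof
  assume "arithmetic_pair (B1 \<phi>) (B2 \<phi>)"
  then obtain F \<sigma> M where "number_field F" "def_field (B1 \<phi>) \<subseteq> F" "field_aut F \<sigma>"
    and M: "\<And>i. pclass (M$i) = pclass (B1 \<phi> $ i)" "\<And>i k. M$i$k \<in> F"
    and lines: "lines_of (act \<sigma> M) = lines_of (B2 \<phi>)"
    unfolding arithmetic_pair_def by blast
  then have F: "is_subfield F" by (simp add: number_field_def)
  interpret subfield_automorphism F \<sigma> by standard fact+
  have "\<phi> \<in> F"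
    using ratio_mem_def_field[of "B1 \<phi>" 7 1 2] \<open>def_field (B1 \<phi>) \<subseteq> F\<close>
    by (auto simp: B1_lines zphi_def)
  define \<psi> where "\<psi> = \<sigma> \<phi>"
  have "\<psi> * \<psi> = 1 - \<psi>"
    using arg_cong[OF golden, of \<sigma>] \<open>\<phi> \<in> F\<close> unfolding \<psi>_def
    by (simp add: map_mult map_diff map_1 subfield_closed(2)[OF F] F[unfolded is_subfield_def])
  then have \<psi>: "\<psi> = \<phi> \<or> \<psi> = -1 - \<phi>" by (rule golden_conjugates[OF golden])
  have B1_F: "\<forall>i k. B1 \<phi> $ i $ k \<in> F"
    by (simp add: forall_13 forall_3 B1_lines subfield_zphi[OF F \<open>\<phi> \<in> F\<close>])
  have B1_\<sigma>: "\<forall>i. (\<chi> k. \<sigma> (B1 \<phi> $ i $ k)) = B1 \<psi> $ i"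
    by (simp add: forall_13 vec_eq_iff forall_3 B1_lines map_zphi[OF \<open>\<phi> \<in> F\<close>] \<psi>_def)
  have "pclass (act \<sigma> M $ i) = pclass (B1 \<psi> $ i)" for i
  proof -
    have "B1 \<phi> $ i \<noteq> 0" using is_arrangement_B1 by (simp add: is_arrangement_def)
    moreover have "M$i \<noteq> 0" using M(1)[of i] calculation pclass_eq_zero_iff by blast
    ultimately have "pclass (\<chi> k. \<sigma> (M$i$k)) = pclass (\<chi> k. \<sigma> (B1 \<phi> $ i $ k))"
      using pclass_map_eq[OF M(2)] B1_F M(1) by blast
    then show ?thesis using B1_\<sigma> by (simp add: act_def)
  qed
  then have "lines_of (B2 \<phi>) = lines_of (B1 \<psi>)" using lines by (simp add: lines_of_def)
  then obtain i where "pclass (B2 \<phi> $ 11) = pclass (B1 \<psi> $ i)" unfolding lines_of_def by blast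
  moreover have "B2 \<phi> $ 11 \<noteq> 0" using is_arrangement_B2 by (simp add: is_arrangement_def)
  ultimately have "meet (B2 \<phi> $ 11) (B1 \<psi> $ i) = 0"
    using meet_eq_0_iff_pclass_eq pclass_eq_zero_iff by blast
  then show False using B2_line_not_in_B1[OF \<psi>] by blast
qed

end

theorem theorem3p3:
  fixes \<phi> :: complex
  assumes "\<phi> = (-1 + complex_of_real (sqrt 5)) / 2 \<or> \<phi> = (-1 - complex_of_real (sqrt 5)) / 2"
  shows "is_pair (B1 \<phi>) (B2 \<phi>) \<and> \<not> arithmetic_pair (B1 \<phi>) (B2 \<phi>)
     \<and> def_field (B1 \<phi>) = Q_sqrt5 \<and> def_field (B2 \<phi>) = Q_sqrt5
     \<and> def_field (B1 \<phi>) \<subseteq> \<real> \<and> def_field (B2 \<phi>) \<subseteq> \<real>"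
proof -
  note golden = golden_ratio_eq[OF assms]
  have "zphi \<phi> p \<in> Q_sqrt5" for p
    using subfield_zphi[OF Q_sqrt5_subfield golden_mem_Q_sqrt5[OF assms]] .
  then have entries: "\<forall>i k. B1 \<phi> $ i $ k \<in> Q_sqrt5" "\<forall>i k. B2 \<phi> $ i $ k \<in> Q_sqrt5"
    by (simp_all add: forall_13 forall_3 B1_lines B2_lines)
  have "def_field (B1 \<phi>) = Q_sqrt5"
    by (rule def_field_eq_Q_sqrt5[where r = 7, OF _ _ _ golden(2)])
      (use entries in \<open>simp_all add: B1_lines zphi_def\<close>)
  moreover have "def_field (B2 \<phi>) = Q_sqrt5"
    by (rule def_field_eq_Q_sqrt5[where r = 7, OF _ _ _ golden(2)])
      (use entries in \<open>simp_all add: B2_lines zphi_def\<close>)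
  ultimately show ?thesis
    using is_pair_B1_B2[OF golden(1)] not_arithmetic_pair_B1_B2[OF golden(1)] Q_sqrt5_subset_Reals
    by simp
qed

end
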